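(* Consider the bidding-club model described in the context, and fix a given bidding club of size $k\ge 2$. Compare two situations. - Situation (a): agents play the equilibrium in which all invited agents accept and truthfully report their valuations, and singletons bid $b^e(v,P^{n,1})$ after the announcement $n$. - Situation (b): the same $k$ agents instead participate directly in the main auction as singleton bidders, and all agents follow the same strategies. Then singleton bidders and members of other bidding clubs have higher expected utility in situation (a) than in situation (b).
   Context: A single indivisible good is sold by a first-price auction with participation revelation. The auction proceeds as follows: (i) agents register; (ii) the auctioneer announces the number $n$ of registered bidders; (iii) registered bidders submit sealed bids; (iv) the highest bidder wins and pays his bid, and all others pay $0$. There is no participation fee. Agents are risk-neutral with independent private valuations drawn i.i.d. from a continuous, atomless cumulative distribution function $F$ on the nonnegative reals. A winner with valuation $v$ paying $t$ gets utility $v-t$; a non-winner paying $t$ gets utility $-t$. For an integer $m\ge2$ define $b^e(v,m)=v-F(v)^{-(m-1)}\int_0^vF(u)^{m-1}du$. For a distribution $P=(p_j)$ on the number of agents define $b^e(v,P)=\sum_{j\ge2}p_jb^e(v,j)$. Write $P_{x\ge i}=\sum_{x\ge i}p_x$. Write $P<P'$ iff there is $l$ with $P_{x\ge i}=P'_{x\ge i}$ for all $i<l$ and $P_{x\ge i}<P'_{x\ge i}$ for all $i\ge l$. Standing assumption: $P<P'$ implies $b^e(v,P)<b^e(v,P')$ for all $v$. Environment. The number $n_c$ of potential coordinators has distribution $\gamma_C$ with $\gamma_C(0)=\gamma_C(1)=0$. Independently, each potential coordinator is associated with a random number of agents with common distribution $\gamma_A$ on $\{1,\dots,\kappa\}$,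 where $\kappa\ge2$, $\gamma_A(0)=0$ and $\gamma_A(1)<1$. - A potential coordinator with one agent yields a singleton bidder. - A potential coordinator with at least two agents is a bidding club whose agents are all invited. Each agent privately knows his valuation and his club size ($1$ for singletons). All of this is common knowledge. $P^{n,k}$ denotes the distribution of $k+X_1+\dots+X_{n-1}$, where the $X_j$ are i.i.d. with distribution $\gamma_A$. Coordinator protocol for a club of $k$ invited agents: - Each agent declines (and bids independently) or accepts and reports a binding valuation $\mu_i$. - If some agent declines, every accepting agent is registered, with bid $b^e(\mu_i,P^{n,k})$ after the announcement $n$. - If all accept, only the highest reporter $h$ is registered, with bid $b^e(\mu_h,P^{n,1})$. If $h$ wins, he pays that bid to the auctioneer plus $b^e(\mu_h,P^{n,k})-b^e(\mu_h,P^{n,1})$ to the coordinator. *)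

theory Defs
  imports "HOL-Probability.Probability"
begin

definition be :: "(real \<Rightarrow> real) \<Rightarrow> real \<Rightarrow> nat \<Rightarrow> real" where
  "be F v m = v - inverse (F v ^ (m - 1)) * integral {0..v} (\<lambda>u. F u ^ (m - 1))"

definition beP :: "(real \<Rightarrow> real) \<Rightarrow> real \<Rightarrow> nat pmf \<Rightarrow> real" where
  "beP F v P = (\<Sum>\<^sub>\<infinity> j \<in> {2..}. pmf P j * be F v j)"

fun sum_iid :: "nat pmf \<Rightarrow> nat \<Rightarrow> nat pmf" where
  "sum_iid g 0 = return_pmf 0"
| "sum_iid g (Suc m) = bind_pmf g (\<lambda>x. map_pmf (\<lambda>s. x + s) (sum_iid g m))"

definition Pnk :: "nat pmf \<Rightarrow> nat \<Rightarrow> nat \<Rightarrow> nat pmf" where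
  "Pnk g n k = map_pmf (\<lambda>s. k + s) (sum_iid g (n - 1))"

text \<open>Probability, given n coordinators, that an agent with valuation v whose own club
  has size j (j = 1: singleton) has the highest valuation among all agents, when one of
  the other n-1 coordinators is the fixed club of size k and the remaining n-2 have
  i.i.d. sizes distributed by gA.  The total number of other agents is distributed as
  P^{n-1, (j-1)+k}; each of them has valuation below v with probability F v.\<close>
definition win_prob :: "(real \<Rightarrow> real) \<Rightarrow> nat pmf \<Rightarrow> nat \<Rightarrow> nat \<Rightarrow> nat \<Rightarrow> real \<Rightarrow> real" where
  "win_prob F gA n k j v = measure_pmf.expectation (Pnk gA (n - 1) ((j - 1) + k)) (\<lambda>t. F v ^ t)"

text \<open>Situation (a): the fixed club of size k coordinates; the number of registered bidders
  announced is n (= number of coordinators).  An agent with valuation v and club size j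
  wins iff he has the highest valuation and then pays (in total) b^e(v, P^{n,j}).\<close>
definition EU_a :: "(real \<Rightarrow> real) \<Rightarrow> nat pmf \<Rightarrow> nat pmf \<Rightarrow> nat \<Rightarrow> nat \<Rightarrow> real \<Rightarrow> real" where
  "EU_a F gC gA k j v = measure_pmf.expectation gC
     (\<lambda>n. win_prob F gA n k j v * (v - beP F v (Pnk gA n j)))"

text \<open>Situation (b): the k agents of the fixed club bid as singletons, so the announced
  number of registered bidders is n + k - 1, and everybody uses the same strategies
  (now evaluated at the announcement n + k - 1).\<close>
definition EU_b :: "(real \<Rightarrow> real) \<Rightarrow> nat pmf \<Rightarrow> nat pmf \<Rightarrow> nat \<Rightarrow> nat \<Rightarrow> real \<Rightarrow> real" where
  "EU_b F gC gA k j v = measure_pmf.expectation gC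
     (\<lambda>n. win_prob F gA n k j v * (v - beP F v (Pnk gA (n + k - 1) j)))"

end

theory Submission
  imports Defs
begin

(* Given the announcement n, an agent wins in (a) and in (b) with the same probability, so the
   two situations differ only in the price he pays on winning: b^e(v, P^{n,j}) in (a) against
   b^e(v, P^{n+k-1,j}) in (b), where the latter adds k - 1 further i.i.d. club sizes, each at
   least 1, to the number of agents.  With r = F(u)/F(v) one has
   b^e(v,m+1) - b^e(v,m) = integral over [0,v] of r^(m-1) (1 - r), which is positive because
   r is continuous and passes through 1/2.  So b^e(v,m) is strictly increasing for m >= 1, the
   extra summands strictly raise the expected price, and the utility is larger in (a) for
   every n. *)

lemma measure_pmf_expectation_strict_mono:
  fixes f g :: "'a \<Rightarrow> real"
  assumes "integrable (measure_pmf p) f" "integrable (measure_pmf p) g"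
    and "\<And>x. x \<in> set_pmf p \<Longrightarrow> f x < g x"
  shows "measure_pmf.expectation p f < measure_pmf.expectation p g"
  using assms by (intro measure_pmf.integral_less_AE_space) (auto simp: AE_measure_pmf_iff)

lemma finite_set_pmf_sum_iid: "finite (set_pmf g) \<Longrightarrow> finite (set_pmf (sum_iid g m))"
  by (induction m) auto

lemma finite_set_pmf_Pnk: "finite (set_pmf g) \<Longrightarrow> finite (set_pmf (Pnk g n c))"
  by (simp add: Pnk_def finite_set_pmf_sum_iid)

lemma expectation_sum_iid_Suc:
  fixes f :: "nat \<Rightarrow> real"
  assumes g: "finite (set_pmf g)"
  shows "measure_pmf.expectation (sum_iid g (Suc m)) f =
    measure_pmf.expectation g (\<lambda>a. measure_pmf.expectation (sum_iid g m) (\<lambda>s. f (a + s)))"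
proof -
  have "measure_pmf.expectation (sum_iid g (Suc m)) f =
    (\<Sum>a\<in>set_pmf g. pmf g a *\<^sub>R measure_pmf.expectation (map_pmf ((+) a) (sum_iid g m)) f)"
    by (simp only: sum_iid.simps, rule pmf_expectation_bind) (use g finite_set_pmf_sum_iid in auto)
  also have "\<dots> = measure_pmf.expectation g
      (\<lambda>a. measure_pmf.expectation (sum_iid g m) (\<lambda>s. f (a + s)))"
    by (subst integral_measure_pmf[OF g]) auto
  finally show ?thesis .
qed

context
  fixes g :: "nat pmf" and h :: "nat \<Rightarrow> real"
  assumes g_finite: "finite (set_pmf g)" and g_pos: "set_pmf g \<subseteq> {1..}"
    and h_mono: "strict_mono_on {1..} h"
begin

lemma expectation_sum_iid_strict_mono_offset:
  assumes "1 \<le> c" "c < c'"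
  shows "measure_pmf.expectation (sum_iid g m) (\<lambda>s. h (c + s))
       < measure_pmf.expectation (sum_iid g m) (\<lambda>s. h (c' + s))"
  using assms
proof (induction m arbitrary: c c')
  case 0
  then show ?case by (simp add: strict_mono_onD[OF h_mono])
next
  case (Suc m)
  have shifted: "measure_pmf.expectation (sum_iid g m) (\<lambda>s. h (c + (a + s)))
      < measure_pmf.expectation (sum_iid g m) (\<lambda>s. h (c' + (a + s)))" for a
    using Suc.IH[of "c + a" "c' + a"] Suc.prems by (simp add: add.assoc)
  show ?case
    unfolding expectation_sum_iid_Suc[OF g_finite]
    by (rule measure_pmf_expectation_strict_mono[OF integrable_measure_pmf_finite
          integrable_measure_pmf_finite, OF g_finite g_finite shifted])
qed

lemma expectation_sum_iid_strict_mono_count: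
  assumes c: "1 \<le> c" and "m < m'"
  shows "measure_pmf.expectation (sum_iid g m) (\<lambda>s. h (c + s))
       < measure_pmf.expectation (sum_iid g m') (\<lambda>s. h (c + s))"
proof -
  have "measure_pmf.expectation (sum_iid g n) (\<lambda>s. h (c + s))
      < measure_pmf.expectation (sum_iid g (Suc n)) (\<lambda>s. h (c + s))" for n
  proof -
    have "measure_pmf.expectation (sum_iid g n) (\<lambda>s. h (c + s))
        = measure_pmf.expectation g (\<lambda>a. measure_pmf.expectation (sum_iid g n) (\<lambda>s. h (c + s)))"
      by simp
    also have "\<dots> < measure_pmf.expectation g
        (\<lambda>a. measure_pmf.expectation (sum_iid g n) (\<lambda>s. h (c + a + s)))"
      using g_pos c
      by (intro measure_pmf_expectation_strict_mono[OF integrable_measure_pmf_finite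
          integrable_measure_pmf_finite] g_finite expectation_sum_iid_strict_mono_offset) auto
    also have "\<dots> = measure_pmf.expectation (sum_iid g (Suc n)) (\<lambda>s. h (c + s))"
      by (subst expectation_sum_iid_Suc[OF g_finite]) (simp add: add.assoc)
    finally show ?thesis .
  qed
  then show ?thesis
    using lift_Suc_mono_less[of "\<lambda>n. measure_pmf.expectation (sum_iid g n) (\<lambda>s. h (c + s))"]
      \<open>m < m'\<close> by blast
qed

end

lemma be_Suc_eq: "be F v (Suc p) = v - integral {0..v} (\<lambda>u. (F u / F v) ^ p)"
proof -
  have "(\<lambda>u. (F u / F v) ^ p) = (\<lambda>u. inverse (F v ^ p) * F u ^ p)"
    by (simp add: divide_inverse_commute power_mult_distrib power_inverse)
  then show ?thesis by (simp add: be_def integral_mult_right)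
qed

lemma be_0: "0 \<le> v \<Longrightarrow> be F v 0 = 0"
  and be_1: "0 \<le> v \<Longrightarrow> be F v 1 = 0"
  by (simp_all add: be_def)

lemma beP_eq_expectation:
  assumes P: "finite (set_pmf P)" and v: "0 \<le> v"
  shows "beP F v P = measure_pmf.expectation P (be F v)"
proof -
  have "beP F v P = (\<Sum>\<^sub>\<infinity>i \<in> set_pmf P \<inter> {2..}. pmf P i * be F v i)"
    unfolding beP_def by (rule infsum_cong_neutral) (auto simp: set_pmf_eq)
  also have "\<dots> = (\<Sum>i \<in> set_pmf P \<inter> {2..}. be F v i * pmf P i)"
    using P by (simp add: mult.commute)
  also have "\<dots> = measure_pmf.expectation P (be F v)"
  proof (rule integral_measure_pmf_real[symmetric])
    fix i assume "i \<in> set_pmf P" "be F v i \<noteq> 0"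
    with be_0[OF v, of F] be_1[OF v, of F] have "i \<noteq> 0" "i \<noteq> 1"
      by metis+
    with \<open>i \<in> set_pmf P\<close> show "i \<in> set_pmf P \<inter> {2..}"
      by auto
  qed (use P in simp)
  finally show ?thesis .
qed

lemma cdf_le_1:
  fixes F :: "real \<Rightarrow> real"
  assumes "mono F" "(F \<longlongrightarrow> 1) at_top"
  shows "F v \<le> 1"
proof (rule tendsto_lowerbound[OF assms(2)])
  show "\<forall>\<^sub>F x in at_top. F v \<le> F x"
    using eventually_ge_at_top[of v] by eventually_elim (use assms(1) in \<open>auto simp: mono_def\<close>)
qed simp

lemma win_prob_pos: "0 < F v \<Longrightarrow> F v \<le> 1 \<Longrightarrow> 0 < win_prob F gA n k j v"
  unfolding win_prob_def
  using measure_pmf_expectation_strict_mono[of _ "\<lambda>_. 0" "\<lambda>t. F v ^ t"]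
  by (simp add: measure_pmf.integrable_const_bound[where B=1] power_le_one)

lemma win_prob_le_1: "0 \<le> F v \<Longrightarrow> F v \<le> 1 \<Longrightarrow> win_prob F gA n k j v \<le> 1"
  unfolding win_prob_def
  by (intro measure_pmf.integral_le_const measure_pmf.integrable_const_bound[where B=1])
    (auto simp: power_le_one)

context
  fixes F :: "real \<Rightarrow> real" and v :: real
  assumes F_mono: "mono F" and F_cont: "continuous_on UNIV F"
    and F_zero: "\<forall>x\<le>0. F x = 0" and F_v_pos: "0 < F v"
begin

lemma valuation_pos: "0 < v"
  using F_zero F_v_pos by (metis linorder_not_le order_less_irrefl)

lemma cdf_ratio_bounds:
  assumes "u \<in> {0..v}"
  shows "0 \<le> F u / F v" "F u / F v \<le> 1"
proof -
  have "F 0 \<le> F u" "F u \<le> F v"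
    using assms F_mono by (auto simp: mono_def)
  then show "0 \<le> F u / F v" "F u / F v \<le> 1"
    using F_zero F_v_pos by auto
qed

lemma continuous_on_cdf_ratio_power: "continuous_on {0..v} (\<lambda>u. (F u / F v) ^ p)"
  by (intro continuous_intros continuous_on_subset[OF F_cont]) (use F_v_pos in auto)

lemma be_Suc_less: "be F v (Suc p) < be F v (Suc (Suc p))"
proof -
  define d where "d u = (F u / F v) ^ p - (F u / F v) ^ Suc p" for u
  have d_cont: "continuous_on {0..v} d"
    unfolding d_def by (intro continuous_on_diff continuous_on_cdf_ratio_power)
  have d_nonneg: "0 \<le> d u" if "u \<in> {0..v}" for u
    using cdf_ratio_bounds[OF that] power_decreasing[of p "Suc p" "F u / F v"]
    unfolding d_def by simp
  obtain u0 where u0: "0 \<le> u0" "u0 \<le> v" "F u0 = F v / 2"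
    using IVT'[of F 0 "F v / 2" v] F_zero F_v_pos valuation_pos continuous_on_subset[OF F_cont]
    by auto
  have "F u0 / F v = 1 / 2"
    using u0 F_v_pos by simp
  then have "d u0 \<noteq> 0"
    by (simp add: d_def)
  then have "integral {0..v} d \<noteq> 0"
    using integral_eq_0_iff[OF d_cont valuation_pos d_nonneg] u0 by auto
  moreover have "0 \<le> integral {0..v} d"
    using d_nonneg by (intro integral_nonneg integrable_continuous_interval d_cont) auto
  moreover have "integral {0..v} d
      = integral {0..v} (\<lambda>u. (F u / F v) ^ p) - integral {0..v} (\<lambda>u. (F u / F v) ^ Suc p)"
    unfolding d_def
    by (intro integral_diff integrable_continuous_interval continuous_on_cdf_ratio_power)
  ultimately show ?thesis
    unfolding be_Suc_eq by linarith
qed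

lemma strict_mono_on_be: "strict_mono_on {1..} (be F v)"
proof (rule strict_mono_onI)
  fix a b :: nat assume "a \<in> {1..}" "b \<in> {1..}" "a < b"
  then obtain p q where "a = Suc p" "b = Suc q" "p < q"
    by (metis Suc_less_SucD atLeast_iff not0_implies_Suc not_one_le_zero)
  then show "be F v a < be F v b"
    using lift_Suc_mono_less[of "\<lambda>p. be F v (Suc p)", OF be_Suc_less] by simp
qed

lemma be_nonneg: "0 \<le> be F v m"
proof (cases "m \<le> 1")
  case True
  then show ?thesis
    using be_0 be_1 valuation_pos by (cases m) auto
next
  case False
  then show ?thesis
    using strict_mono_onD[OF strict_mono_on_be, of 1 m] be_1 valuation_pos by simp
qed

lemma be_le_valuation: "be F v m \<le> v"
proof (cases m)
  case 0
  then show ?thesis using be_0 valuation_pos by simp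
next
  case (Suc p)
  have "0 \<le> integral {0..v} (\<lambda>u. (F u / F v) ^ p)"
    using cdf_ratio_bounds
    by (intro integral_nonneg integrable_continuous_interval continuous_on_cdf_ratio_power) auto
  then show ?thesis unfolding Suc be_Suc_eq by simp
qed

lemma beP_bounds:
  assumes "finite (set_pmf P)"
  shows "0 \<le> beP F v P" "beP F v P \<le> v"
  using assms valuation_pos be_nonneg be_le_valuation
  by (auto simp: beP_eq_expectation integrable_measure_pmf_finite AE_measure_pmf_iff
      intro!: measure_pmf.integral_ge_const measure_pmf.integral_le_const)

lemma beP_Pnk_strict_mono:
  assumes g: "finite (set_pmf g)" "set_pmf g \<subseteq> {1..}" and c: "1 \<le> c" and "n - 1 < n' - 1"
  shows "beP F v (Pnk g n c) < beP F v (Pnk g n' c)"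
  unfolding beP_eq_expectation[OF finite_set_pmf_Pnk[OF g(1)] less_imp_le[OF valuation_pos]]
  using expectation_sum_iid_strict_mono_count[OF g strict_mono_on_be c \<open>n - 1 < n' - 1\<close>]
  by (simp add: Pnk_def)

lemma integrable_win_prob_mult_surplus:
  fixes gC :: "nat pmf" and m :: "nat \<Rightarrow> nat"
  assumes "F v \<le> 1" "finite (set_pmf gA)"
  shows "integrable gC (\<lambda>n. win_prob F gA n k j v * (v - beP F v (Pnk gA (m n) j)))"
proof (rule measure_pmf.integrable_const_bound[where B=v])
  show "AE n in gC. norm (win_prob F gA n k j v * (v - beP F v (Pnk gA (m n) j))) \<le> v"
  proof (rule AE_I2)
    fix n
    have "0 \<le> win_prob F gA n k j v" "win_prob F gA n k j v \<le> 1"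
      using win_prob_pos[of F v] win_prob_le_1[of F v] F_v_pos assms(1) by (auto simp: less_imp_le)
    moreover have "0 \<le> v - beP F v (Pnk gA (m n) j)" "v - beP F v (Pnk gA (m n) j) \<le> v"
      using beP_bounds[OF finite_set_pmf_Pnk[OF assms(2)]] by auto
    ultimately show "norm (win_prob F gA n k j v * (v - beP F v (Pnk gA (m n) j))) \<le> v"
      by (simp add: abs_mult order_trans[OF mult_left_le_one_le])
  qed
qed simp

end

theorem corollary2:
  fixes F :: "real \<Rightarrow> real" and gC gA :: "nat pmf" and \<kappa> k j :: nat and v :: real
  assumes F_mono: "mono F"
    and F_cont: "continuous_on UNIV F"
    and F_nonneg_support: "\<forall>x\<le>0. F x = 0"
    and F_lim: "(F \<longlongrightarrow> 1) at_top"
    and gC0: "pmf gC 0 = 0" and gC1: "pmf gC 1 = 0"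
    and kappa: "2 \<le> \<kappa>"
    and gA_supp: "set_pmf gA \<subseteq> {1..\<kappa>}"
    and gA1: "pmf gA 1 < 1"
    and k: "2 \<le> k" "k \<le> \<kappa>"
    and j: "1 \<le> j" "j \<le> \<kappa>"
    and v: "0 < F v"
  shows "EU_b F gC gA k j v < EU_a F gC gA k j v"
proof -
  \<comment> \<open>Of the hypotheses on gC, gA, k and \<kappa>, only pmf gC 0 = 0, k \<ge> 2 and the
    finite support of gA inside {1..} are needed.\<close>
  have gA_finite: "finite (set_pmf gA)"
    using gA_supp by (rule finite_subset) simp
  have gA_pos: "set_pmf gA \<subseteq> {1..}"
    using gA_supp by auto
  have F_v_le_1: "F v \<le> 1"
    by (rule cdf_le_1[OF F_mono F_lim])
  have price_less: "beP F v (Pnk gA n j) < beP F v (Pnk gA (n + k - 1) j)" if "n \<in> set_pmf gC" for n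
  proof (rule beP_Pnk_strict_mono[OF F_mono F_cont F_nonneg_support v gA_finite gA_pos j(1)])
    show "n - 1 < n + k - 1 - 1"
      using that gC0 k by (cases n) (auto simp: set_pmf_eq)
  qed
  show ?thesis
    unfolding EU_a_def EU_b_def
    using price_less win_prob_pos[of F v] v F_v_le_1
    by (intro measure_pmf_expectation_strict_mono
        integrable_win_prob_mult_surplus[OF F_mono F_cont F_nonneg_support v F_v_le_1 gA_finite])
      simp
qed

end
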